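(* Let $\alpha:\mathbf{ST}\to\mathbf{PQSym}^*$ be the linear map given, for $f\in\mathbf{ST}_n$, by $\alpha(f)=\alpha_n(f)=\sum_{h\in PF_n,\ \mathrm{std}(h)=f}h$ (and $\alpha(1)=1$). Then $\alpha$ is injective, and for all $f,g\in\mathbf{ST}$: $\alpha(f\succ_qg)=\alpha(f)\succ_q\alpha(g)$, $\alpha(f\cdot_qg)=\alpha(f)\cdot_q\alpha(g)$, $\alpha(f\prec_qg)=\alpha(f)\prec_q\alpha(g)$, and $\Delta\circ\alpha=(\alpha\otimes\alpha)\circ\Delta$. Hence $\mathbf{ST}(q)$ is a sub-$q$-tridendriform bialgebra of $\mathbf{PQSym}^*(q)$.
   Context: Words: maps $h:[n]\to\mathbb{Z}_{>0}$ identified with $(h(1),\dots,h(n))$; $\max(h)$ largest value; $hk$ concatenation; $\cap(h,k)=|\mathrm{Im}(h)\cap\mathrm{Im}(k)|$; $h$ surjective if $\mathrm{Im}(h)=[\max(h)]$. $\mathrm{std}(h)$ is the unique surjective word $s$ of the same length with $h(i)<h(j)\iff s(i)<s(j)$. $\mathbf{ST}(q)$: $\mathbf{ST}_n$ the set of surjections from $[n]$ onto some $[r]$, $\mathbf{ST}=\bigoplus_{n\ge1}\mathbb{K}[\mathbf{ST}_n]$; for $f\in\mathbf{ST}_n$, $g\in\mathbf{ST}_m$: $f\succ_qg=\sum_{\max(h)<\max(k)}q^{\cap(h,k)}hk$, $f\cdot_qg=\sum_{\max(h)=\max(k)}q^{\cap(h,k)-1}hk$, $f\prec_qg=\sum_{\max(h)>\max(k)}q^{\cap(h,k)}hk$,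 over pairs of words $(h,k)$ with $hk$ surjective, $\mathrm{std}(h)=f$, $\mathrm{std}(k)=g$. Coproduct: $\Delta(1)=1\otimes1$, and for $f\in\mathbf{ST}_n$ with $\max(f)=r$, $\Delta(f)=\sum_{j=0}^rf|^{[j]}\otimes\mathrm{std}(f|^{\{j+1,\dots,r\}})$, where $f|^K=(f(j_1),\dots,f(j_l))$ with $\{j_1<\dots<j_l\}=f^{-1}(K)$, empty word $=1$. $\mathbf{PQSym}^*(q)$: $PF_n$ the set of $n$-parking functions, i.e. $f=f^\uparrow\circ\sigma$ with $\sigma\in S_n$ and $f^\uparrow:[n]\to[n]$ non-decreasing with $f^\uparrow(i)\le i$; every surjective word is a parking function. $\mathrm{Park}$: for non-decreasing $f^\uparrow$, $\mathrm{Park}(f^\uparrow)(1)=1$, $\mathrm{Park}(f^\uparrow)(j)=\min\{\mathrm{Park}(f^\uparrow)(j-1)+f^\uparrow(j)-f^\uparrow(j-1),j\}$; for $f=f^\uparrow\circ\sigma$, $\mathrm{Park}(f)=\mathrm{Park}(f^\uparrow)\circ\sigma$. Products on $\mathbf{PQSym}^*=\bigoplus_n\mathbb{K}[PF_n]$: same formulas as for $\mathbf{ST}$ but over pairs $(h,k)$ with $hk$ a parking function, $\mathrm{Park}(h)=f$, $\mathrm{Park}(k)=g$. Coproduct: with $f\times_Pg=(f(1),\dots,f(n),g(1)+n,\dots,g(m)+n)$, $\Delta(f)=\sum_jf^j_{(1)}\otimes f^j_{(2)}$ over all $0\le j\le n$ such that $f=(f^j_{(1)}\times_Pf^j_{(2)})\circ\delta_j$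 for some $f^j_{(1)}\in PF_j$, $f^j_{(2)}\in PF_{n-j}$ and $\delta_j\in S_n$ with $\delta_j^{-1}$ a $(j,n-j)$-shuffle; $\Delta(1)=1\otimes1$. *)

theory Defs
  imports Main "HOL-Combinatorics.Permutations"
begin

text \<open>A word h : [n] -> Z_{>0} is represented by the list (h(1),...,h(n)) of naturals
  (positions are 0-indexed in the list). The empty list is the empty word (the unit 1).\<close>

definition wmax :: "nat list \<Rightarrow> nat" where
  "wmax w = Max (insert 0 (set w))"

definition cap :: "nat list \<Rightarrow> nat list \<Rightarrow> nat" where
  "cap h k = card (set h \<inter> set k)"

definition surj_word :: "nat list \<Rightarrow> bool" where
  "surj_word h \<longleftrightarrow> set h = {1..wmax h}"

definition std :: "nat list \<Rightarrow> nat list" where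
  "std h = (THE s. surj_word s \<and> length s = length h \<and>
      (\<forall>i<length h. \<forall>j<length h. h ! i < h ! j \<longleftrightarrow> s ! i < s ! j))"

definition restr :: "nat list \<Rightarrow> nat set \<Rightarrow> nat list" where
  "restr f K = filter (\<lambda>a. a \<in> K) f"

definition is_parking :: "nat list \<Rightarrow> bool" where
  "is_parking f \<longleftrightarrow> (\<forall>i<length f. 1 \<le> sort f ! i \<and> sort f ! i \<le> i + 1)"

text \<open>Park on a non-decreasing word: Park(1) = 1,
  Park(j) = min(Park(j-1) + f(j) - f(j-1), j).  park_aux a p j bs: a = previous letter,
  p = previous Park value, j = (1-based) position of the head of bs.\<close>
fun park_aux :: "nat \<Rightarrow> nat \<Rightarrow> nat \<Rightarrow> nat list \<Rightarrow> nat list" where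
  "park_aux a p j [] = []"
| "park_aux a p j (b # bs) = (let p' = min (p + b - a) j in p' # park_aux b p' (j + 1) bs)"

fun park_sorted :: "nat list \<Rightarrow> nat list" where
  "park_sorted [] = []"
| "park_sorted (b # bs) = 1 # park_aux b 1 2 bs"

text \<open>For f = f^up o sigma, Park(f) = Park(f^up) o sigma.  The letter f(i) sits in f^up at
  (0-based) position #{letters of f smaller than f(i)} (equal letters of f^up receive equal
  Park values, so this is independent of sigma).\<close>
definition Park :: "nat list \<Rightarrow> nat list" where
  "Park f = map (\<lambda>v. park_sorted (sort f) ! length (filter (\<lambda>u. u < v) f)) f"

text \<open>An element of K[words] is its coefficient function; a tensor is a coefficient
  function on pairs of words.\<close>

definition supp :: "('w \<Rightarrow> 'a::zero) \<Rightarrow> 'w set" where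
  "supp x = {w. x w \<noteq> 0}"

definition in_ST :: "(nat list \<Rightarrow> 'a::zero) \<Rightarrow> bool" where
  "in_ST x \<longleftrightarrow> finite (supp x) \<and> (\<forall>w\<in>supp x. w \<noteq> [] \<and> surj_word w)"

definition lin_ext :: "('w \<Rightarrow> 'v \<Rightarrow> 'a::comm_ring_1) \<Rightarrow> ('w \<Rightarrow> 'a) \<Rightarrow> ('v \<Rightarrow> 'a)" where
  "lin_ext B x = (\<lambda>v. \<Sum>f\<in>supp x. x f * B f v)"

definition bilin_ext :: "('w \<Rightarrow> 'w \<Rightarrow> 'w \<Rightarrow> 'a::comm_ring_1) \<Rightarrow> ('w \<Rightarrow> 'a) \<Rightarrow> ('w \<Rightarrow> 'a) \<Rightarrow> ('w \<Rightarrow> 'a)" where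
  "bilin_ext P x y = (\<lambda>w. \<Sum>f\<in>supp x. \<Sum>g\<in>supp y. x f * y g * P f g w)"

definition tensor_ext :: "('w \<Rightarrow> 'v \<Rightarrow> 'a::comm_ring_1) \<Rightarrow> ('w \<times> 'w \<Rightarrow> 'a) \<Rightarrow> ('v \<times> 'v \<Rightarrow> 'a)" where
  "tensor_ext B T = (\<lambda>(u, v). \<Sum>(a, b)\<in>supp T. T (a, b) * B a u * B b v)"

definition ST_succ_b :: "'a::comm_ring_1 \<Rightarrow> nat list \<Rightarrow> nat list \<Rightarrow> nat list \<Rightarrow> 'a" where
  "ST_succ_b q f g w = (\<Sum>(h, k)\<in>{(h, k). h @ k = w \<and> surj_word (h @ k) \<and> std h = f \<and> std k = g
      \<and> wmax h < wmax k}. q ^ cap h k)"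

definition ST_dot_b :: "'a::comm_ring_1 \<Rightarrow> nat list \<Rightarrow> nat list \<Rightarrow> nat list \<Rightarrow> 'a" where
  "ST_dot_b q f g w = (\<Sum>(h, k)\<in>{(h, k). h @ k = w \<and> surj_word (h @ k) \<and> std h = f \<and> std k = g
      \<and> wmax h = wmax k}. q ^ (cap h k - 1))"

definition ST_prec_b :: "'a::comm_ring_1 \<Rightarrow> nat list \<Rightarrow> nat list \<Rightarrow> nat list \<Rightarrow> 'a" where
  "ST_prec_b q f g w = (\<Sum>(h, k)\<in>{(h, k). h @ k = w \<and> surj_word (h @ k) \<and> std h = f \<and> std k = g
      \<and> wmax h > wmax k}. q ^ cap h k)"

definition ST_Delta_b :: "nat list \<Rightarrow> nat list \<times> nat list \<Rightarrow> 'a::comm_ring_1" where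
  "ST_Delta_b f = (\<lambda>(u, v). \<Sum>j\<in>{0..wmax f}.
      if restr f {1..j} = u \<and> std (restr f {j+1..wmax f}) = v then 1 else 0)"

definition ST_succ where "ST_succ q = bilin_ext (ST_succ_b q)"
definition ST_dot where "ST_dot q = bilin_ext (ST_dot_b q)"
definition ST_prec where "ST_prec q = bilin_ext (ST_prec_b q)"
definition ST_Delta :: "(nat list \<Rightarrow> 'a::comm_ring_1) \<Rightarrow> (nat list \<times> nat list \<Rightarrow> 'a)" where
  "ST_Delta = lin_ext ST_Delta_b"

definition PQ_succ_b :: "'a::comm_ring_1 \<Rightarrow> nat list \<Rightarrow> nat list \<Rightarrow> nat list \<Rightarrow> 'a" where
  "PQ_succ_b q f g w = (\<Sum>(h, k)\<in>{(h, k). h @ k = w \<and> is_parking (h @ k) \<and> Park h = f \<and> Park k = g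
      \<and> wmax h < wmax k}. q ^ cap h k)"

definition PQ_dot_b :: "'a::comm_ring_1 \<Rightarrow> nat list \<Rightarrow> nat list \<Rightarrow> nat list \<Rightarrow> 'a" where
  "PQ_dot_b q f g w = (\<Sum>(h, k)\<in>{(h, k). h @ k = w \<and> is_parking (h @ k) \<and> Park h = f \<and> Park k = g
      \<and> wmax h = wmax k}. q ^ (cap h k - 1))"

definition PQ_prec_b :: "'a::comm_ring_1 \<Rightarrow> nat list \<Rightarrow> nat list \<Rightarrow> nat list \<Rightarrow> 'a" where
  "PQ_prec_b q f g w = (\<Sum>(h, k)\<in>{(h, k). h @ k = w \<and> is_parking (h @ k) \<and> Park h = f \<and> Park k = g
      \<and> wmax h > wmax k}. q ^ cap h k)"

definition times_P :: "nat list \<Rightarrow> nat list \<Rightarrow> nat list" where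
  "times_P f g = f @ map (\<lambda>a. a + length f) g"

text \<open>Coefficient of u (x) v in Delta(f): 1 iff u in PF_j, v in PF_{n-j} (j = length u) and
  f = (u \<times>_P v) o delta for a permutation delta of [n] whose inverse is a (j,n-j)-shuffle
  (for each j the pair (u,v) is unique when it exists).\<close>
definition PQ_Delta_b :: "nat list \<Rightarrow> nat list \<times> nat list \<Rightarrow> 'a::comm_ring_1" where
  "PQ_Delta_b f = (\<lambda>(u, v).
      if is_parking u \<and> is_parking v \<and> length u + length v = length f \<and>
         (\<exists>\<delta>. \<delta> permutes {..<length f} \<and>
              strict_mono_on {..<length u} (inv \<delta>) \<and>
              strict_mono_on {length u..<length f} (inv \<delta>) \<and>
              (\<forall>i<length f. f ! i = times_P u v ! \<delta> i))
      then 1 else 0)"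

definition PQ_succ where "PQ_succ q = bilin_ext (PQ_succ_b q)"
definition PQ_dot where "PQ_dot q = bilin_ext (PQ_dot_b q)"
definition PQ_prec where "PQ_prec q = bilin_ext (PQ_prec_b q)"
definition PQ_Delta :: "(nat list \<Rightarrow> 'a::comm_ring_1) \<Rightarrow> (nat list \<times> nat list \<Rightarrow> 'a)" where
  "PQ_Delta = lin_ext PQ_Delta_b"

definition alpha_b :: "nat list \<Rightarrow> nat list \<Rightarrow> 'a::comm_ring_1" where
  "alpha_b f = (\<lambda>h. if is_parking h \<and> length h = length f \<and> std h = f then 1 else 0)"

definition alpha :: "(nat list \<Rightarrow> 'a::comm_ring_1) \<Rightarrow> (nat list \<Rightarrow> 'a)" where
  "alpha = lin_ext alpha_b"

end

theory Submission
  imports Defs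
begin

text \<open>In a product of
  parking functions the word w = h k appears with h and k replaced by Park h and Park k, and
  Park, like std, relabels letters order-preservingly; so the deconcatenations of w and of std w
  correspond, and the conditions on max h, max k as well as cap(h, k) do not see the relabelling
  by ranks that turns w into std w. Hence the coefficient of w in alpha(f) \<star> alpha(g) is that
  of std w in f \<star> g.

  For the coproduct, a parking function h with std h = f contributes u \<otimes> v to Delta(h) iff
  h is a shuffle of u and of v shifted by length u; this happens iff f can be cut at some t
  with f|^[t] = std u and std(f|^{t+1..}) = std v. Such an h and such a t are both unique when
  they exist, which matches the coefficients of Delta \<circ> alpha and (alpha \<otimes> alpha) \<circ> Delta.
  Injectivity holds because surjective words are parking functions equal to their own
  standardization.\<close>

section \<open>Standardization\<close>

definition rank_in :: "nat list \<Rightarrow> nat \<Rightarrow> nat" where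
  "rank_in h a = card {b \<in> set h. b \<le> a}"

lemma strict_mono_on_rank_in: "strict_mono_on (set h) (rank_in h)"
proof (rule strict_mono_onI)
  fix r s assume "r \<in> set h" "s \<in> set h" "r < s"
  then have "{b \<in> set h. b \<le> r} \<subseteq> {b \<in> set h. b \<le> s}" "s \<in> {b \<in> set h. b \<le> s}"
    "s \<notin> {b \<in> set h. b \<le> r}" by auto
  then have "{b \<in> set h. b \<le> r} \<subset> {b \<in> set h. b \<le> s}" by blast
  then show "rank_in h r < rank_in h s" unfolding rank_in_def by (simp add: psubset_card_mono)
qed

lemma rank_in_bounds: "a \<in> set h \<Longrightarrow> 1 \<le> rank_in h a \<and> rank_in h a \<le> card (set h)"
proof -
  assume "a \<in> set h"
  then have "{b \<in> set h. b \<le> a} \<noteq> {}" by blast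
  then show ?thesis unfolding rank_in_def by (auto simp: Suc_le_eq card_gt_0_iff intro!: card_mono)
qed

lemma strict_mono_on_image_eq_interval:
  fixes A :: "'a::linorder set"
  assumes "finite A" "strict_mono_on A \<psi>" "\<And>a. a \<in> A \<Longrightarrow> \<psi> a \<in> {1..card A}"
  shows "\<psi> ` A = {1..card A}"
proof -
  have "card (\<psi> ` A) = card A"
    using strict_mono_on_imp_inj_on[OF assms(2)] by (simp add: card_image)
  then show ?thesis using assms(3) by (intro card_subset_eq) auto
qed

lemma rank_in_image: "rank_in h ` set h = {1..card (set h)}"
  by (rule strict_mono_on_image_eq_interval) (auto simp: strict_mono_on_rank_in dest: rank_in_bounds)

lemma wmax_eq_interval: "set s = {1..m} \<Longrightarrow> wmax s = m"
proof (cases "m = 0")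
  case False
  assume "set s = {1..m}"
  then have "insert 0 (set s) = {0..m}" using False by auto
  moreover have "Max {0..m} = m" by (intro Max_eqI) auto
  ultimately show ?thesis unfolding wmax_def by simp
qed (simp add: wmax_def)

lemma surj_wordI: "set s = {1..m} \<Longrightarrow> surj_word s"
  unfolding surj_word_def using wmax_eq_interval by metis

lemma surj_word_set_eq: "surj_word s \<Longrightarrow> set s = {1..card (set s)}"
  unfolding surj_word_def by (metis card_atLeastAtMost diff_Suc_1)

lemma surj_word_map_rank_in: "surj_word (map (rank_in h) h)"
  by (rule surj_wordI[of _ "card (set h)"]) (simp add: rank_in_image)

lemma strict_mono_on_surj_word_eq_rank_in:
  assumes s: "surj_word (map \<psi> h)" and m: "strict_mono_on (set h) \<psi>" and a: "a \<in> set h"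
  shows "\<psi> a = rank_in h a"
proof -
  obtain M where S: "\<psi> ` set h = {1..M}" using surj_word_set_eq[OF s] by (metis list.set_map)
  then have "\<psi> a \<le> M" using a by auto
  then have "{c \<in> \<psi> ` set h. c \<le> \<psi> a} = {1..\<psi> a}" unfolding S by auto
  then have "\<psi> a = card {c \<in> \<psi> ` set h. c \<le> \<psi> a}" by simp
  also have "{c \<in> \<psi> ` set h. c \<le> \<psi> a} = \<psi> ` {b \<in> set h. b \<le> a}"
    using strict_mono_on_less_eq[OF m _ a] by auto
  also have "card \<dots> = rank_in h a" unfolding rank_in_def
    by (rule card_image, rule inj_on_subset[OF strict_mono_on_imp_inj_on[OF m]]) auto
  finally show ?thesis .
qed

lemma order_iso_word_eq_map:
  fixes h s :: "nat list"
  assumes len: "length s = length h"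
    and ord: "\<And>i j. i < length h \<Longrightarrow> j < length h \<Longrightarrow> h ! i < h ! j \<longleftrightarrow> s ! i < s ! j"
  obtains \<psi> where "strict_mono_on (set h) \<psi>" "s = map \<psi> h"
proof
  define idx where "idx a = (SOME i. i < length h \<and> h ! i = a)" for a
  have idx: "idx a < length h \<and> h ! idx a = a" if "a \<in> set h" for a
    unfolding idx_def by (rule someI_ex) (use that in \<open>auto simp: in_set_conv_nth\<close>)
  define \<psi> where "\<psi> a = s ! idx a" for a
  show "s = map \<psi> h"
  proof (rule nth_equalityI)
    fix i assume i: "i < length s"
    then have "h ! i \<in> set h" using len by simp
    then have "\<not> s ! i < s ! idx (h ! i)" "\<not> s ! idx (h ! i) < s ! i"
      using ord[of i "idx (h ! i)"] ord[of "idx (h ! i)" i] idx i len by auto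
    then show "s ! i = map \<psi> h ! i" using i len by (simp add: \<psi>_def)
  qed (simp add: len)
  show "strict_mono_on (set h) \<psi>"
  proof (rule strict_mono_onI)
    fix a b assume "a \<in> set h" "b \<in> set h" "a < b"
    then show "\<psi> a < \<psi> b" using ord[of "idx a" "idx b"] idx by (auto simp: \<psi>_def)
  qed
qed

lemma std_eq_map_rank_in: "std h = map (rank_in h) h"
  unfolding std_def
proof (rule the_equality)
  show "surj_word (map (rank_in h) h) \<and> length (map (rank_in h) h) = length h \<and>
      (\<forall>i<length h. \<forall>j<length h. h ! i < h ! j \<longleftrightarrow> map (rank_in h) h ! i < map (rank_in h) h ! j)"
    using surj_word_map_rank_in strict_mono_on_less[OF strict_mono_on_rank_in] by simp
next
  fix s assume "surj_word s \<and> length s = length h \<and>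
      (\<forall>i<length h. \<forall>j<length h. h ! i < h ! j \<longleftrightarrow> s ! i < s ! j)"
  moreover from this obtain \<psi> where "strict_mono_on (set h) \<psi>" "s = map \<psi> h"
    using order_iso_word_eq_map by blast
  ultimately show "s = map (rank_in h) h"
    using strict_mono_on_surj_word_eq_rank_in by auto
qed

lemma std_eq_iff: "std h = s \<longleftrightarrow> surj_word s \<and> (\<exists>\<psi>. strict_mono_on (set h) \<psi> \<and> s = map \<psi> h)"
proof
  assume "std h = s"
  then show "surj_word s \<and> (\<exists>\<psi>. strict_mono_on (set h) \<psi> \<and> s = map \<psi> h)"
    using std_eq_map_rank_in strict_mono_on_rank_in surj_word_map_rank_in by auto
next
  assume "surj_word s \<and> (\<exists>\<psi>. strict_mono_on (set h) \<psi> \<and> s = map \<psi> h)"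
  then show "std h = s" using strict_mono_on_surj_word_eq_rank_in std_eq_map_rank_in by auto
qed

lemma length_std [simp]: "length (std h) = length h"
  by (simp add: std_eq_map_rank_in)

lemma surj_word_std: "surj_word (std h)"
  by (simp add: std_eq_map_rank_in surj_word_map_rank_in)

lemma std_map_strict_mono_on: "strict_mono_on (set h) \<psi> \<Longrightarrow> std (map \<psi> h) = std h"
proof -
  assume m: "strict_mono_on (set h) \<psi>"
  let ?\<chi> = "rank_in (map \<psi> h) \<circ> \<psi>"
  have "strict_mono_on (set h) ?\<chi>"
    using strict_mono_on_rank_in[of "map \<psi> h"] m
    by (auto intro!: strict_mono_onI dest: strict_mono_onD)
  moreover have "std (map \<psi> h) = map ?\<chi> h" by (simp add: std_eq_map_rank_in)
  ultimately show ?thesis using surj_word_std[of "map \<psi> h"] std_eq_iff[of h] by metis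
qed

lemma std_surj_word: "surj_word s \<Longrightarrow> std s = s"
  using std_eq_iff[of s s] strict_mono_on_id by fastforce

lemma std_map_rank_in_sublist: "set u \<subseteq> set h \<Longrightarrow> std (map (rank_in h) u) = std u"
  by (rule std_map_strict_mono_on, rule monotone_on_subset[OF strict_mono_on_rank_in])

section \<open>Parking functions and Park\<close>

definition count_less :: "nat list \<Rightarrow> nat \<Rightarrow> nat" where
  "count_less h v = length (filter (\<lambda>u. u < v) h)"

lemma length_filter_less_filter:
  assumes "\<And>x. P x \<Longrightarrow> Q x" "x \<in> set xs" "Q x" "\<not> P x"
  shows "length (filter P xs) < length (filter Q xs)"
proof -
  have "length (filter P (filter Q xs)) < length (filter Q xs)"
    by (rule length_filter_less[of x]) (use assms in auto)
  moreover have "filter P (filter Q xs) = filter P xs" using assms(1) by (auto intro: filter_cong)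
  ultimately show ?thesis by simp
qed

lemma sorted_nth_less_iff:
  "sorted s \<Longrightarrow> i < length s \<Longrightarrow> s ! i < v \<longleftrightarrow> i < length (filter (\<lambda>u. u < v) s)"
proof (induction s arbitrary: i)
  case (Cons x xs)
  show ?case
  proof (cases "x < v")
    case True
    then show ?thesis using Cons by (cases i) auto
  next
    case False
    then have "filter (\<lambda>u. u < v) (x # xs) = []" using Cons.prems(1) by (auto simp: filter_empty_conv)
    moreover have "\<not> (x # xs) ! i < v"
      using Cons.prems False by (cases i) (auto, meson le_less_trans nth_mem)
    ultimately show ?thesis by simp
  qed
qed simp

lemma count_less_less_length: "v \<in> set h \<Longrightarrow> count_less h v < length h"
  unfolding count_less_def using length_filter_less[of v h "\<lambda>u. u < v"] by simp

lemma sort_nth_count_less: "v \<in> set h \<Longrightarrow> sort h ! count_less h v = v"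
proof -
  assume v: "v \<in> set h"
  let ?s = "sort h"
  have c: "count_less h v = length (filter (\<lambda>u. u < v) ?s)"
    by (simp add: count_less_def filter_sort)
  have l: "count_less h v < length ?s" using count_less_less_length[OF v] by simp
  have ge: "\<not> ?s ! count_less h v < v" using sorted_nth_less_iff[OF sorted_sort l] c by simp
  obtain i where i: "i < length ?s" "?s ! i = v" using v by (metis in_set_conv_nth set_sort)
  have "\<not> i < count_less h v" using sorted_nth_less_iff[OF sorted_sort i(1), of v] i c by simp
  then have "?s ! count_less h v \<le> ?s ! i" using sorted_nth_mono[OF sorted_sort _ i(1)] by simp
  then show ?thesis using ge i by simp
qed

text \<open>The value v of f sits in the sorted word at position count_less f v.\<close>
lemma is_parking_iff_count_less:
  "is_parking f \<longleftrightarrow> (\<forall>v\<in>set f. 1 \<le> v \<and> v \<le> count_less f v + 1)"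
proof
  assume P: "is_parking f"
  show "\<forall>v\<in>set f. 1 \<le> v \<and> v \<le> count_less f v + 1"
    using P count_less_less_length sort_nth_count_less unfolding is_parking_def by metis
next
  assume A: "\<forall>v\<in>set f. 1 \<le> v \<and> v \<le> count_less f v + 1"
  show "is_parking f" unfolding is_parking_def
  proof (intro allI impI)
    fix i assume i: "i < length f"
    let ?s = "sort f"
    have il: "i < length ?s" using i by simp
    have "?s ! i \<in> set f" using il by (metis nth_mem set_sort)
    moreover have "\<not> i < length (filter (\<lambda>u. u < ?s ! i) ?s)"
      using sorted_nth_less_iff[OF sorted_sort il, of "?s ! i"] by simp
    then have "count_less f (?s ! i) \<le> i" by (simp add: count_less_def filter_sort)
    ultimately show "1 \<le> ?s ! i \<and> ?s ! i \<le> i + 1" using A by force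
  qed
qed

lemma is_parking_letter_bounds: "is_parking w \<Longrightarrow> v \<in> set w \<Longrightarrow> 1 \<le> v \<and> v \<le> length w"
  using is_parking_iff_count_less count_less_less_length by fastforce

lemma surj_word_imp_parking: "surj_word w \<Longrightarrow> is_parking w"
  unfolding is_parking_iff_count_less
proof
  fix b assume s: "surj_word w" and b: "b \<in> set w"
  have sw: "set w = {1..wmax w}" using s by (simp add: surj_word_def)
  have "{1..<b} \<subseteq> set (filter (\<lambda>u. u < b) w)" using sw b by auto
  then have "card {1..<b} \<le> card (set (filter (\<lambda>u. u < b) w))" by (intro card_mono) auto
  also have "\<dots> \<le> count_less w b" unfolding count_less_def by (rule card_length)
  finally show "1 \<le> b \<and> b \<le> count_less w b + 1" using sw b by auto
qed

lemma length_park_aux [simp]: "length (park_aux a p j bs) = length bs"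
  by (induction bs arbitrary: a p j) (auto simp: Let_def)

lemma length_park_sorted [simp]: "length (park_sorted s) = length s"
  by (cases s) auto

lemma park_aux_nth_le: "k < length bs \<Longrightarrow> park_aux a p j bs ! k \<le> j + k"
proof (induction bs arbitrary: a p j k)
  case (Cons b bs)
  then show ?case
    using Cons.IH[of "k - 1" b "min (p + b - a) j" "Suc j"] by (cases k) (auto simp: Let_def)
qed simp

lemma park_sorted_nth_le: "k < length s \<Longrightarrow> park_sorted s ! k \<le> k + 1"
  using park_aux_nth_le[of "k - 1" "tl s" "hd s" 1 2] by (cases s; cases k) auto

text \<open>The invariant p < j keeps the truncation at j from flattening a strict step.\<close>
lemma park_aux_step:
  "sorted (a # bs) \<Longrightarrow> p < j \<Longrightarrow> Suc k < length (a # bs) \<Longrightarrow>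
   (p # park_aux a p j bs) ! k \<le> (p # park_aux a p j bs) ! Suc k \<and>
   ((a # bs) ! k < (a # bs) ! Suc k \<longrightarrow> (p # park_aux a p j bs) ! k < (p # park_aux a p j bs) ! Suc k)"
proof (induction bs arbitrary: a p j k)
  case (Cons b bs)
  define p' where "p' = min (p + b - a) j"
  have eq: "park_aux a p j (b # bs) = p' # park_aux b p' (j + 1) bs" by (simp add: p'_def Let_def)
  show ?case
  proof (cases k)
    case 0
    then show ?thesis using Cons.prems unfolding eq by (auto simp: p'_def)
  next
    case (Suc k')
    have "p' < j + 1" by (simp add: p'_def)
    then show ?thesis using Cons.IH[of b p' "j + 1" k'] Cons.prems Suc unfolding eq by simp
  qed
qed simp

lemma park_sorted_step:
  "sorted s \<Longrightarrow> Suc k < length s \<Longrightarrow> park_sorted s ! k \<le> park_sorted s ! Suc k \<and>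
     (s ! k < s ! Suc k \<longrightarrow> park_sorted s ! k < park_sorted s ! Suc k)"
  using park_aux_step[of "hd s" "tl s" 1 2 k] by (cases s) auto

lemma park_sorted_mono:
  "sorted s \<Longrightarrow> i \<le> i' \<Longrightarrow> i' < length s \<Longrightarrow> park_sorted s ! i \<le> park_sorted s ! i'"
proof (induction i')
  case (Suc i')
  then show ?case
    using park_sorted_step[OF Suc.prems(1), of i'] by (cases "i = Suc i'") (auto simp: le_Suc_eq)
qed simp

lemma park_sorted_strict:
  "sorted s \<Longrightarrow> i < i' \<Longrightarrow> i' < length s \<Longrightarrow> s ! i < s ! i' \<Longrightarrow>
    park_sorted s ! i < park_sorted s ! i'"
proof (induction i')
  case (Suc m)
  show ?case
  proof (cases "s ! m < s ! Suc m")
    case True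
    have "park_sorted s ! i \<le> park_sorted s ! m"
      using park_sorted_mono[OF Suc.prems(1), of i m] Suc.prems by simp
    also have "\<dots> < park_sorted s ! Suc m" using park_sorted_step[OF Suc.prems(1), of m] Suc.prems True by simp
    finally show ?thesis .
  next
    case False
    then have "s ! i < s ! m" "i < m" using Suc.prems sorted_nth_mono[OF Suc.prems(1), of m "Suc m"]
      by (auto simp: less_Suc_eq)
    then have "park_sorted s ! i < park_sorted s ! m" using Suc by simp
    also have "\<dots> \<le> park_sorted s ! Suc m" using park_sorted_step[OF Suc.prems(1), of m] Suc.prems by simp
    finally show ?thesis .
  qed
qed simp

definition park_value :: "nat list \<Rightarrow> nat \<Rightarrow> nat" where
  "park_value h v = park_sorted (sort h) ! count_less h v"

lemma Park_eq_map: "Park h = map (park_value h) h"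
  unfolding Park_def park_value_def count_less_def by simp

lemma strict_mono_on_park_value: "strict_mono_on (set h) (park_value h)"
proof (rule strict_mono_onI)
  fix v v' assume v: "v \<in> set h" and v': "v' \<in> set h" and lt: "v < v'"
  have "count_less h v < count_less h v'" unfolding count_less_def
    by (rule length_filter_less_filter[of _ _ v]) (use v lt in auto)
  moreover have "sort h ! count_less h v < sort h ! count_less h v'"
    using sort_nth_count_less v v' lt by simp
  ultimately show "park_value h v < park_value h v'" unfolding park_value_def
    using park_sorted_strict[OF sorted_sort] count_less_less_length[OF v'] by simp
qed

lemma count_less_map_strict_mono_on:
  "strict_mono_on (set h) \<psi> \<Longrightarrow> v \<in> set h \<Longrightarrow> count_less (map \<psi> h) (\<psi> v) = count_less h v"
  unfolding count_less_def by (simp add: filter_map comp_def strict_mono_on_less cong: filter_cong)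

lemma is_parking_Park: "is_parking (Park h)"
  unfolding is_parking_iff_count_less
proof
  fix w assume "w \<in> set (Park h)"
  then obtain v where v: "v \<in> set h" "w = park_value h v" by (auto simp: Park_eq_map)
  have c: "count_less (Park h) w = count_less h v"
    using count_less_map_strict_mono_on[OF strict_mono_on_park_value v(1)] v(2) by (simp add: Park_eq_map)
  have l: "count_less h v < length (sort h)" using count_less_less_length[OF v(1)] by simp
  then have "sort h \<noteq> []" by (metis length_0_conv not_less0)
  then have "1 \<le> park_sorted (sort h) ! 0" by (cases "sort h") auto
  also have "\<dots> \<le> park_value h v" unfolding park_value_def using park_sorted_mono[OF sorted_sort _ l] by simp
  finally show "1 \<le> w \<and> w \<le> count_less (Park h) w + 1"
    using park_sorted_nth_le[OF l] c v by (simp add: park_value_def)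
qed

lemma std_Park: "std (Park h) = std h"
  by (simp add: Park_eq_map std_map_strict_mono_on strict_mono_on_park_value)

section \<open>Supports and the map alpha\<close>

lemma finite_supp_lin_ext:
  assumes "finite (supp x)" "\<And>f. f \<in> supp x \<Longrightarrow> finite (supp (B f))"
  shows "finite (supp (lin_ext B x))"
proof (rule finite_subset)
  show "supp (lin_ext B x) \<subseteq> (\<Union>f\<in>supp x. supp (B f))"
  proof
    fix v assume "v \<in> supp (lin_ext B x)"
    then have "lin_ext B x v \<noteq> 0" by (simp add: supp_def)
    then obtain f where "f \<in> supp x" "x f * B f v \<noteq> 0"
      unfolding lin_ext_def by (rule sum.not_neutral_contains_not_neutral)
    then show "v \<in> (\<Union>f\<in>supp x. supp (B f))" by (auto simp: supp_def)
  qed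
qed (use assms in auto)

lemma finite_supp_bilin_ext:
  assumes "finite (supp x)" "finite (supp y)"
    and "\<And>f g. f \<in> supp x \<Longrightarrow> g \<in> supp y \<Longrightarrow> finite (supp (P f g))"
  shows "finite (supp (bilin_ext P x y))"
proof (rule finite_subset)
  show "supp (bilin_ext P x y) \<subseteq> (\<Union>f\<in>supp x. \<Union>g\<in>supp y. supp (P f g))"
  proof
    fix w assume "w \<in> supp (bilin_ext P x y)"
    then have "bilin_ext P x y w \<noteq> 0" by (simp add: supp_def)
    then obtain f g where "f \<in> supp x" "g \<in> supp y" "x f * y g * P f g w \<noteq> 0"
      unfolding bilin_ext_def by (auto elim!: sum.not_neutral_contains_not_neutral)
    then show "w \<in> (\<Union>f\<in>supp x. \<Union>g\<in>supp y. supp (P f g))"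
      by (auto simp: supp_def) (metis mult_zero_right)
  qed
qed (use assms in auto)

lemma sum_supp_mult_delta:
  fixes x :: "'w \<Rightarrow> 'a::comm_ring_1"
  assumes "finite (supp x)"
  shows "(\<Sum>f\<in>supp x. x f * (if f = a then t else 0)) = x a * t"
proof -
  have "(\<Sum>f\<in>supp x. x f * (if f = a then t else 0)) = (\<Sum>f\<in>supp x. if f = a then x a * t else 0)"
    by (rule sum.cong) auto
  also have "\<dots> = x a * t" using assms by (simp add: sum.delta' supp_def)
  finally show ?thesis .
qed

lemma finite_words_letters_le:
  "finite {w :: nat list. length w = n \<and> (\<forall>v\<in>set w. v \<le> n)}"
  by (rule finite_subset[OF _ finite_lists_length_le[of "{0..n}" n]]) auto

lemma finite_parking_words: "finite {w. is_parking w \<and> length w = n}"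
  by (rule finite_subset[OF _ finite_words_letters_le[of n]]) (auto dest: is_parking_letter_bounds)

lemma finite_surj_words: "finite {w. surj_word w \<and> length w = n}"
  by (rule finite_subset[OF _ finite_parking_words[of n]]) (auto intro: surj_word_imp_parking)

lemma alpha_b_eq: "alpha_b f w = (if is_parking w \<and> f = std w then 1 else 0)"
  unfolding alpha_b_def by (metis length_std)

lemma finite_supp_alpha:
  "finite (supp x) \<Longrightarrow> finite (supp (alpha x))"
  unfolding alpha_def
  by (rule finite_supp_lin_ext, assumption,
      rule finite_subset[OF _ finite_parking_words]) (auto simp: supp_def alpha_b_def)

lemma alpha_apply:
  assumes "finite (supp x)"
  shows "alpha x w = (if is_parking w then x (std w) else 0)"
  using sum_supp_mult_delta[OF assms, of "std w" "if is_parking w then 1 else 0"]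
  unfolding alpha_def lin_ext_def alpha_b_eq by (simp add: if_distrib cong: if_cong)

section \<open>The three products\<close>

definition deconcat_coeff ::
    "(nat list \<Rightarrow> bool) \<Rightarrow> (nat list \<Rightarrow> nat list) \<Rightarrow> (nat list \<Rightarrow> nat list \<Rightarrow> bool) \<Rightarrow>
     (nat list \<Rightarrow> nat list \<Rightarrow> 'a::comm_ring_1) \<Rightarrow> nat list \<Rightarrow> nat list \<Rightarrow> nat list \<Rightarrow> 'a" where
  "deconcat_coeff C F R c f g w =
    (\<Sum>(h, k)\<in>{(h, k). h @ k = w \<and> C (h @ k) \<and> F h = f \<and> F k = g \<and> R h k}. c h k)"

lemma ST_succ_b_eq:
  "ST_succ_b q = deconcat_coeff surj_word std (\<lambda>h k. wmax h < wmax k) (\<lambda>h k. q ^ cap h k)"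
  by (simp add: fun_eq_iff ST_succ_b_def deconcat_coeff_def)

lemma ST_dot_b_eq:
  "ST_dot_b q = deconcat_coeff surj_word std (\<lambda>h k. wmax h = wmax k) (\<lambda>h k. q ^ (cap h k - 1))"
  by (simp add: fun_eq_iff ST_dot_b_def deconcat_coeff_def)

lemma ST_prec_b_eq:
  "ST_prec_b q = deconcat_coeff surj_word std (\<lambda>h k. wmax k < wmax h) (\<lambda>h k. q ^ cap h k)"
  by (simp add: fun_eq_iff ST_prec_b_def deconcat_coeff_def)

lemma PQ_succ_b_eq:
  "PQ_succ_b q = deconcat_coeff is_parking Park (\<lambda>h k. wmax h < wmax k) (\<lambda>h k. q ^ cap h k)"
  by (simp add: fun_eq_iff PQ_succ_b_def deconcat_coeff_def)

lemma PQ_dot_b_eq: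
  "PQ_dot_b q = deconcat_coeff is_parking Park (\<lambda>h k. wmax h = wmax k) (\<lambda>h k. q ^ (cap h k - 1))"
  by (simp add: fun_eq_iff PQ_dot_b_def deconcat_coeff_def)

lemma PQ_prec_b_eq:
  "PQ_prec_b q = deconcat_coeff is_parking Park (\<lambda>h k. wmax k < wmax h) (\<lambda>h k. q ^ cap h k)"
  by (simp add: fun_eq_iff PQ_prec_b_def deconcat_coeff_def)

lemma sum_deconcatenations:
  "(\<Sum>(h, k)\<in>{(h, k). h @ k = w \<and> P h k}. c h k) =
   (\<Sum>i\<in>{..length w}. if P (take i w) (drop i w) then c (take i w) (drop i w) else 0)"
proof -
  let ?I = "{i\<in>{..length w}. P (take i w) (drop i w)}"
  have "{(h, k). h @ k = w \<and> P h k} = (\<lambda>i. (take i w, drop i w)) ` ?I"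
  proof (rule set_eqI, rule iffI)
    fix p assume "p \<in> {(h, k). h @ k = w \<and> P h k}"
    then obtain h k where "p = (h, k)" "h @ k = w" "P h k" by blast
    then show "p \<in> (\<lambda>i. (take i w, drop i w)) ` ?I" by (intro image_eqI[of _ _ "length h"]) auto
  qed auto
  moreover have "inj_on (\<lambda>i. (take i w, drop i w)) ?I"
  proof (rule inj_onI)
    fix i j assume "i \<in> ?I" "j \<in> ?I" "(take i w, drop i w) = (take j w, drop j w)"
    then have "length (take i w) = length (take j w)" "i \<le> length w" "j \<le> length w" by auto
    then show "i = j" by simp
  qed
  ultimately have "(\<Sum>(h, k)\<in>{(h, k). h @ k = w \<and> P h k}. c h k) = (\<Sum>i\<in>?I. c (take i w) (drop i w))"
    by (simp add: sum.reindex)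
  also have "\<dots> = (\<Sum>i\<in>{..length w}. if P (take i w) (drop i w) then c (take i w) (drop i w) else 0)"
    by (rule sum.inter_filter) simp
  finally show ?thesis .
qed

lemma sum_supp_mult_delta2:
  fixes x y :: "'w \<Rightarrow> 'a::comm_ring_1"
  assumes "finite (supp x)" "finite (supp y)"
  shows "(\<Sum>f\<in>supp x. \<Sum>g\<in>supp y. x f * y g * (if f = a \<and> g = b then t else 0)) = x a * y b * t"
proof -
  have "(\<Sum>f\<in>supp x. \<Sum>g\<in>supp y. x f * y g * (if f = a \<and> g = b then t else 0)) =
      (\<Sum>f\<in>supp x. x f * (if f = a then (\<Sum>g\<in>supp y. y g * (if g = b then t else 0)) else 0))"
    by (intro sum.cong refl) (auto simp: sum_distrib_left mult.assoc)
  then show ?thesis by (simp add: sum_supp_mult_delta assms mult.assoc)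
qed

lemma bilin_ext_deconcat_coeff:
  fixes x y :: "nat list \<Rightarrow> 'a::comm_ring_1"
  assumes fx: "finite (supp x)" and fy: "finite (supp y)"
  shows "bilin_ext (deconcat_coeff C F R c) x y w
   = (\<Sum>i\<in>{..length w}. if C w \<and> R (take i w) (drop i w)
        then x (F (take i w)) * y (F (drop i w)) * c (take i w) (drop i w) else 0)"
proof -
  define d where "d i = (if C w \<and> R (take i w) (drop i w) then c (take i w) (drop i w) else 0)" for i
  have coeff: "deconcat_coeff C F R c f g w =
      (\<Sum>i\<in>{..length w}. if f = F (take i w) \<and> g = F (drop i w) then d i else 0)" for f g
    unfolding deconcat_coeff_def d_def sum_deconcatenations by (intro sum.cong refl) auto
  have "bilin_ext (deconcat_coeff C F R c) x y w = (\<Sum>i\<in>{..length w}. \<Sum>f\<in>supp x. \<Sum>g\<in>supp y.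
      x f * y g * (if f = F (take i w) \<and> g = F (drop i w) then d i else 0))"
    unfolding bilin_ext_def coeff by (simp add: sum_distrib_left sum.swap[of _ "{..length w}"])
  also have "\<dots> = (\<Sum>i\<in>{..length w}. x (F (take i w)) * y (F (drop i w)) * d i)"
    by (simp add: sum_supp_mult_delta2[OF fx fy])
  finally show ?thesis by (simp add: d_def if_distrib cong: if_cong)
qed

lemma supp_deconcat_coeff_subset:
  assumes "\<And>h. length (F h) = length h"
  shows "supp (deconcat_coeff C F R c f g) \<subseteq> {w. C w \<and> length w = length f + length g}"
proof
  fix w assume "w \<in> supp (deconcat_coeff C F R c f g)"
  then have "deconcat_coeff C F R c f g w \<noteq> 0" by (simp add: supp_def)
  then obtain h k where "h @ k = w" "C (h @ k)" "F h = f" "F k = g"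
    unfolding deconcat_coeff_def by (auto elim!: sum.not_neutral_contains_not_neutral)
  then show "w \<in> {w. C w \<and> length w = length f + length g}" using assms by auto
qed

lemma finite_supp_bilin_ext_deconcat_coeff_std:
  "finite (supp x) \<Longrightarrow> finite (supp y) \<Longrightarrow>
    finite (supp (bilin_ext (deconcat_coeff surj_word std R c) x y))"
  by (intro finite_supp_bilin_ext finite_subset[OF supp_deconcat_coeff_subset finite_surj_words]) simp_all

text \<open>Letters are required to stay positive because wmax measures the empty word as 0.\<close>
definition relabel_invariant :: "(nat list \<Rightarrow> nat list \<Rightarrow> 'b) \<Rightarrow> bool" where
  "relabel_invariant R \<longleftrightarrow> (\<forall>h k \<psi>. strict_mono_on (set (h @ k)) \<psi> \<longrightarrow> 0 \<notin> set (h @ k) \<longrightarrow>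
     0 \<notin> \<psi> ` set (h @ k) \<longrightarrow> R (map \<psi> h) (map \<psi> k) = R h k)"

lemma relabel_invariantD:
  "relabel_invariant R \<Longrightarrow> strict_mono_on (set (h @ k)) \<psi> \<Longrightarrow> 0 \<notin> set (h @ k) \<Longrightarrow>
     0 \<notin> \<psi> ` set (h @ k) \<Longrightarrow> R (map \<psi> h) (map \<psi> k) = R h k"
  unfolding relabel_invariant_def by blast

lemma relabel_invariant_swap: "relabel_invariant R \<Longrightarrow> relabel_invariant (\<lambda>h k. R k h)"
  unfolding relabel_invariant_def by (simp add: Un_commute)

lemma relabel_invariant_comb:
  assumes "relabel_invariant R" "relabel_invariant S"
  shows "relabel_invariant (\<lambda>h k. G (R h k) (S h k))"
  unfolding relabel_invariant_def
  using relabel_invariantD[OF assms(1)] relabel_invariantD[OF assms(2)] by simp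

lemma relabel_invariant_cap: "relabel_invariant (\<lambda>h k. G (cap h k))"
  unfolding relabel_invariant_def
proof (intro allI impI)
  fix h k and \<psi> :: "nat \<Rightarrow> nat" assume "strict_mono_on (set (h @ k)) \<psi>"
  then have i: "inj_on \<psi> (set h \<union> set k)" by (simp add: strict_mono_on_imp_inj_on)
  then have "\<psi> ` (set h \<inter> set k) = \<psi> ` set h \<inter> \<psi> ` set k" by (intro inj_on_image_Int) auto
  moreover have "inj_on \<psi> (set h \<inter> set k)" using i by (rule inj_on_subset) auto
  ultimately show "G (cap (map \<psi> h) (map \<psi> k)) = G (cap h k)"
    unfolding cap_def by (simp add: card_image[symmetric])
qed

lemma wmax_less_wmax_iff:
  "0 \<notin> set k \<Longrightarrow> wmax h < wmax k \<longleftrightarrow> k \<noteq> [] \<and> (\<forall>a\<in>set h. \<exists>b\<in>set k. a < b)"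
proof
  assume lt: "wmax h < wmax k"
  have "wmax k \<in> insert 0 (set k)" unfolding wmax_def by (rule Max_in) auto
  then have wk: "wmax k \<in> set k" using lt by auto
  have hb: "\<forall>a\<in>set h. a \<le> wmax h" unfolding wmax_def by auto
  show "k \<noteq> [] \<and> (\<forall>a\<in>set h. \<exists>b\<in>set k. a < b)"
  proof (intro conjI ballI)
    show "k \<noteq> []" using wk by auto
    fix a assume "a \<in> set h"
    then have "a < wmax k" using hb lt by (meson le_less_trans)
    then show "\<exists>b\<in>set k. a < b" using wk by blast
  qed
next
  assume pos: "0 \<notin> set k" and R: "k \<noteq> [] \<and> (\<forall>a\<in>set h. \<exists>b\<in>set k. a < b)"
  have kb: "\<forall>b\<in>set k. b \<le> wmax k" unfolding wmax_def by auto
  have "wmax h \<in> insert 0 (set h)" unfolding wmax_def by (rule Max_in) auto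
  then show "wmax h < wmax k"
  proof
    assume "wmax h = 0"
    obtain b where b: "b \<in> set k" using R by (cases k) auto
    then have "0 < b" using pos by (intro gr0I) auto
    then show ?thesis using kb b \<open>wmax h = 0\<close> by (simp add: less_le_trans)
  next
    assume "wmax h \<in> set h"
    then obtain b where "b \<in> set k" "wmax h < b" using R by blast
    then show ?thesis using kb by fastforce
  qed
qed

lemma relabel_invariant_wmax_less: "relabel_invariant (\<lambda>h k. wmax h < wmax k)"
  unfolding relabel_invariant_def
proof (intro allI impI)
  fix h k and \<psi> :: "nat \<Rightarrow> nat"
  assume m: "strict_mono_on (set (h @ k)) \<psi>" and "0 \<notin> set (h @ k)" "0 \<notin> \<psi> ` set (h @ k)"
  then have "0 \<notin> set k" "0 \<notin> set (map \<psi> k)" by auto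
  moreover have "(\<forall>a\<in>set h. \<exists>b\<in>set k. \<psi> a < \<psi> b) \<longleftrightarrow> (\<forall>a\<in>set h. \<exists>b\<in>set k. a < b)"
    using strict_mono_on_less[OF m] by auto
  ultimately show "(wmax (map \<psi> h) < wmax (map \<psi> k)) = (wmax h < wmax k)"
    by (simp add: wmax_less_wmax_iff)
qed

lemma relabel_invariant_wmax_greater: "relabel_invariant (\<lambda>h k. wmax k < wmax h)"
  using relabel_invariant_swap[OF relabel_invariant_wmax_less] .

lemma relabel_invariant_wmax_eq: "relabel_invariant (\<lambda>h k. wmax h = wmax k)"
proof -
  have "(\<lambda>h k. wmax h = wmax k) = (\<lambda>h k. \<not> wmax h < wmax k \<and> \<not> wmax k < wmax h)"
    by (intro ext) auto
  then show ?thesis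
    using relabel_invariant_comb[OF relabel_invariant_wmax_less relabel_invariant_wmax_greater,
        where G="\<lambda>a b. \<not> a \<and> \<not> b"] by (simp only:)
qed

lemma take_std: "take i (std w) = map (rank_in w) (take i w)"
  by (simp add: std_eq_map_rank_in take_map)

lemma drop_std: "drop i (std w) = map (rank_in w) (drop i w)"
  by (simp add: std_eq_map_rank_in drop_map)

lemma std_take_std: "std (take i (std w)) = std (take i w)"
  unfolding take_std by (rule std_map_rank_in_sublist[OF set_take_subset])

lemma std_drop_std: "std (drop i (std w)) = std (drop i w)"
  unfolding drop_std by (rule std_map_rank_in_sublist[OF set_drop_subset])

lemma relabel_invariant_std:
  assumes "relabel_invariant R" "0 \<notin> set w"
  shows "R (take i (std w)) (drop i (std w)) = R (take i w) (drop i w)"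
proof -
  have w: "set (take i w @ drop i w) = set w" by simp
  have "0 \<notin> rank_in w ` set w" using rank_in_bounds by fastforce
  then show ?thesis unfolding take_std drop_std
    by (intro relabel_invariantD[OF assms(1)]) (simp_all only: w strict_mono_on_rank_in assms(2) simp_thms)
qed

lemma alpha_Park:
  fixes x :: "nat list \<Rightarrow> 'a::comm_ring_1"
  shows "finite (supp x) \<Longrightarrow> alpha x (Park h) = x (std h)"
  by (simp add: alpha_apply is_parking_Park std_Park)

lemma alpha_bilin_ext_deconcat_coeff:
  fixes x y :: "nat list \<Rightarrow> 'a::comm_ring_1"
  assumes fx: "finite (supp x)" and fy: "finite (supp y)"
    and R: "relabel_invariant R" and c: "relabel_invariant c"
  shows "alpha (bilin_ext (deconcat_coeff surj_word std R c) x y) =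
    bilin_ext (deconcat_coeff is_parking Park R c) (alpha x) (alpha y)"
proof
  fix w
  have fz: "finite (supp (bilin_ext (deconcat_coeff surj_word std R c) x y))"
    using finite_supp_bilin_ext_deconcat_coeff_std[OF fx fy] .
  have RHS: "bilin_ext (deconcat_coeff is_parking Park R c) (alpha x) (alpha y) w =
      (\<Sum>i\<in>{..length w}. if is_parking w \<and> R (take i w) (drop i w)
        then x (std (take i w)) * y (std (drop i w)) * c (take i w) (drop i w) else 0)"
    unfolding bilin_ext_deconcat_coeff[OF finite_supp_alpha[OF fx] finite_supp_alpha[OF fy]]
      alpha_Park[OF fx] alpha_Park[OF fy] ..
  show "alpha (bilin_ext (deconcat_coeff surj_word std R c) x y) w =
      bilin_ext (deconcat_coeff is_parking Park R c) (alpha x) (alpha y) w"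
  proof (cases "is_parking w")
    case True
    then have "0 \<notin> set w" using is_parking_letter_bounds by fastforce
    then show ?thesis unfolding RHS alpha_apply[OF fz] bilin_ext_deconcat_coeff[OF fx fy]
      by (simp only: True surj_word_std std_take_std std_drop_std length_std
          relabel_invariant_std[OF R] relabel_invariant_std[OF c] simp_thms if_True)
  qed (simp add: RHS alpha_apply[OF fz])
qed

lemma alpha_ST_succ:
  "finite (supp x) \<Longrightarrow> finite (supp y) \<Longrightarrow> alpha (ST_succ q x y) = PQ_succ q (alpha x) (alpha y)"
  unfolding ST_succ_def PQ_succ_def ST_succ_b_eq PQ_succ_b_eq
  by (intro alpha_bilin_ext_deconcat_coeff relabel_invariant_wmax_less relabel_invariant_cap)

lemma alpha_ST_dot:
  "finite (supp x) \<Longrightarrow> finite (supp y) \<Longrightarrow> alpha (ST_dot q x y) = PQ_dot q (alpha x) (alpha y)"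
  unfolding ST_dot_def PQ_dot_def ST_dot_b_eq PQ_dot_b_eq
  by (intro alpha_bilin_ext_deconcat_coeff relabel_invariant_wmax_eq relabel_invariant_cap)

lemma alpha_ST_prec:
  "finite (supp x) \<Longrightarrow> finite (supp y) \<Longrightarrow> alpha (ST_prec q x y) = PQ_prec q (alpha x) (alpha y)"
  unfolding ST_prec_def PQ_prec_def ST_prec_b_eq PQ_prec_b_eq
  by (intro alpha_bilin_ext_deconcat_coeff relabel_invariant_wmax_greater relabel_invariant_cap)

section \<open>The coproduct\<close>

lemma filter_eq_map_nth: "filter P h = map ((!) h) (filter (\<lambda>i. P (h ! i)) [0..<length h])"
proof -
  have "filter P h = filter P (map ((!) h) [0..<length h])" by (simp add: map_nth)
  then show ?thesis by (simp add: filter_map comp_def)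
qed

lemma filter_upt_eq_map_strict_mono_on:
  assumes "strict_mono_on {a..<b} \<sigma>" "\<sigma> ` {a..<b} = {i. i < n \<and> P i}"
  shows "filter P [0..<n] = map \<sigma> [a..<b]"
proof (rule sorted_distinct_set_unique)
  have "sorted_wrt (<) (map \<sigma> [a..<b])"
    unfolding sorted_wrt_map
    by (rule sorted_wrt_mono_rel[OF _ sorted_wrt_upt]) (auto intro: strict_mono_onD[OF assms(1)])
  then show "sorted (map \<sigma> [a..<b])" "distinct (map \<sigma> [a..<b])" by (auto simp: strict_sorted_iff)
  have "sorted_wrt (<) (filter P [0..<n])" by (rule sorted_wrt_filter) simp
  then show "sorted (filter P [0..<n])" "distinct (filter P [0..<n])" by (auto simp: strict_sorted_iff)
  show "set (filter P [0..<n]) = set (map \<sigma> [a..<b])" using assms(2) by auto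
qed

lemma image_inv_permutes:
  assumes "\<delta> permutes S" "A \<subseteq> S"
  shows "inv \<delta> ` A = {i \<in> S. \<delta> i \<in> A}"
proof (rule set_eqI, rule iffI)
  fix i assume "i \<in> {i \<in> S. \<delta> i \<in> A}"
  then show "i \<in> inv \<delta> ` A" using permutes_inverses(2)[OF assms(1)] by (metis (mono_tags) image_eqI mem_Collect_eq)
qed (use assms permutes_inverses(1)[OF assms(1)] permutes_in_image[OF permutes_inv[OF assms(1)]] in auto)

text \<open>h = w \<circ> \<delta> with \<delta>\<inverse> a (j, n-j)-shuffle exactly when h is a shuffle of the two blocks
  of w, provided the letters of w are at most j precisely in its first block.\<close>
lemma unshuffle_perm_imp_filters:
  fixes h w :: "nat list"
  defines "n \<equiv> length h"
  assumes len: "length w = n" and jn: "j \<le> n" and sep: "\<And>k. k < n \<Longrightarrow> w ! k \<le> j \<longleftrightarrow> k < j"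
    and dp: "\<delta> permutes {..<n}" and m1: "strict_mono_on {..<j} (inv \<delta>)"
    and m2: "strict_mono_on {j..<n} (inv \<delta>)" and hw: "\<forall>i<n. h ! i = w ! \<delta> i"
  shows "filter (\<lambda>a. a \<le> j) h = take j w \<and> filter (\<lambda>a. j < a) h = drop j w"
proof -
  define \<sigma> where "\<sigma> = inv \<delta>"
  have sp: "\<sigma> permutes {..<n}" unfolding \<sigma>_def by (rule permutes_inv[OF dp])
  have hs: "k < n \<Longrightarrow> h ! \<sigma> k = w ! k" for k
    using hw permutes_in_image[OF sp] permutes_inverses(1)[OF dp] by (simp add: \<sigma>_def)
  have Q: "i < n \<Longrightarrow> h ! i \<le> j \<longleftrightarrow> \<delta> i < j" for i
    using hw sep permutes_in_image[OF dp] by simp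
  have "\<sigma> ` {0..<j} = {i \<in> {..<n}. \<delta> i \<in> {0..<j}}"
    unfolding \<sigma>_def by (rule image_inv_permutes[OF dp]) (use jn in auto)
  also have "\<dots> = {i. i < n \<and> h ! i \<le> j}" using Q by auto
  finally have P1: "filter (\<lambda>i. h ! i \<le> j) [0..<n] = map \<sigma> [0..<j]"
    using m1 by (intro filter_upt_eq_map_strict_mono_on) (simp_all add: \<sigma>_def lessThan_atLeast0)
  have "\<sigma> ` {j..<n} = {i \<in> {..<n}. \<delta> i \<in> {j..<n}}"
    unfolding \<sigma>_def by (rule image_inv_permutes[OF dp]) auto
  also have "\<dots> = {i. i < n \<and> j < h ! i}"
    using Q permutes_in_image[OF dp] by (auto simp flip: not_le)
  finally have P2: "filter (\<lambda>i. j < h ! i) [0..<n] = map \<sigma> [j..<n]"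
    using m2 by (intro filter_upt_eq_map_strict_mono_on) (simp_all add: \<sigma>_def)
  have "filter (\<lambda>a. a \<le> j) h = map ((!) w) [0..<j]"
    unfolding filter_eq_map_nth[of _ h] n_def[symmetric] P1 using hs jn by simp
  also have "\<dots> = take j w" using jn len by (intro nth_equalityI) auto
  finally have "filter (\<lambda>a. a \<le> j) h = take j w" .
  moreover have "filter (\<lambda>a. j < a) h = map ((!) w) [j..<n]"
    unfolding filter_eq_map_nth[of _ h] n_def[symmetric] P2 using hs by simp
  moreover have "map ((!) w) [j..<n] = drop j w" using len by (intro nth_equalityI) auto
  ultimately show ?thesis by simp
qed

lemma permutes_nth_distinct:
  assumes "distinct L" "set L = {..<length L}"
  shows "(\<lambda>i. if i < length L then L ! i else i) permutes {..<length L}"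
proof (rule bij_imp_permutes)
  show "bij_betw (\<lambda>i. if i < length L then L ! i else i) {..<length L} {..<length L}"
    using bij_betw_nth[OF assms(1)] assms(2) by (subst bij_betw_cong[of _ _ "(!) L"]) auto
qed simp

lemma filters_imp_unshuffle_perm:
  fixes h w :: "nat list"
  defines "n \<equiv> length h"
  assumes len: "length w = n" and jn: "j \<le> n"
    and F1: "filter (\<lambda>a. a \<le> j) h = take j w" and F2: "filter (\<lambda>a. j < a) h = drop j w"
  obtains \<delta> where "\<delta> permutes {..<n}" "strict_mono_on {..<j} (inv \<delta>)"
    "strict_mono_on {j..<n} (inv \<delta>)" "\<forall>i<n. h ! i = w ! \<delta> i"
proof -
  define ps where "ps = filter (\<lambda>i. h ! i \<le> j) [0..<n]"
  define qs where "qs = filter (\<lambda>i. j < h ! i) [0..<n]"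
  have ps: "map ((!) h) ps = take j w" using F1 filter_eq_map_nth[of _ h] by (simp add: ps_def n_def)
  have qs: "map ((!) h) qs = drop j w" using F2 filter_eq_map_nth[of _ h] by (simp add: qs_def n_def)
  have lps: "length ps = j" using arg_cong[OF ps, of length] jn len by simp
  have lqs: "length qs = n - j" using arg_cong[OF qs, of length] len by simp
  define \<sigma> where "\<sigma> = (\<lambda>i. if i < n then (ps @ qs) ! i else i)"
  have "distinct (ps @ qs)" "set (ps @ qs) = {..<n}" "length (ps @ qs) = n"
    using lps lqs jn unfolding ps_def qs_def by auto
  then have sp: "\<sigma> permutes {..<n}" unfolding \<sigma>_def using permutes_nth_distinct[of "ps @ qs"] by simp
  have sorted: "sorted_wrt (<) ps" "sorted_wrt (<) qs" unfolding ps_def qs_def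
    by (auto intro: sorted_wrt_filter)
  have m1: "strict_mono_on {..<j} \<sigma>"
    using sorted_wrt_nth_less[OF sorted(1)] jn lps by (auto intro!: strict_mono_onI simp: \<sigma>_def nth_append)
  have m2: "strict_mono_on {j..<n} \<sigma>"
    using sorted_wrt_nth_less[OF sorted(2)] lps lqs
    by (auto intro!: strict_mono_onI simp: \<sigma>_def nth_append)
  have hs: "h ! \<sigma> k = w ! k" if k: "k < n" for k
  proof (cases "k < j")
    case True
    then have "h ! \<sigma> k = take j w ! k" using k lps by (simp add: \<sigma>_def nth_append flip: ps)
    then show ?thesis using True by simp
  next
    case False
    then have "h ! \<sigma> k = drop j w ! (k - j)" using k lps lqs by (simp add: \<sigma>_def nth_append flip: qs)
    then show ?thesis using False jn len by simp
  qed
  show ?thesis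
  proof
    show "inv \<sigma> permutes {..<n}" by (rule permutes_inv[OF sp])
    show "strict_mono_on {..<j} (inv (inv \<sigma>))" "strict_mono_on {j..<n} (inv (inv \<sigma>))"
      using m1 m2 permutes_inv_inv[OF sp] by simp_all
    show "\<forall>i<n. h ! i = w ! inv \<sigma> i"
      using hs[of "inv \<sigma> _"] permutes_inverses(1)[OF sp] permutes_in_image[OF permutes_inv[OF sp]] by simp
  qed
qed

definition parking_split :: "nat list \<Rightarrow> nat list \<Rightarrow> nat list \<Rightarrow> bool" where
  "parking_split h u v \<longleftrightarrow> is_parking u \<and> is_parking v \<and>
     filter (\<lambda>a. a \<le> length u) h = u \<and> filter (\<lambda>a. length u < a) h = map (\<lambda>a. a + length u) v"

lemma parking_split_length:
  "parking_split h u v \<Longrightarrow> length u + length v = length h"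
  using sum_length_filter_compl[of "\<lambda>a. a \<le> length u" h]
  by (auto simp: parking_split_def not_le)

lemma times_P_separates:
  assumes "is_parking u" "is_parking v" "k < length u + length v"
  shows "times_P u v ! k \<le> length u \<longleftrightarrow> k < length u"
proof (cases "k < length u")
  case True
  then show ?thesis using is_parking_letter_bounds[OF assms(1) nth_mem[OF True]]
    by (simp add: times_P_def nth_append)
next
  case False
  then have "k - length u < length v" using assms(3) by simp
  moreover from this have "1 \<le> v ! (k - length u)"
    using is_parking_letter_bounds[OF assms(2) nth_mem] by blast
  ultimately show ?thesis using False by (simp add: times_P_def nth_append)
qed

lemma PQ_Delta_b_eq: "PQ_Delta_b h (u, v) = (if parking_split h u v then 1 else 0)"
proof -
  let ?w = "times_P u v" and ?j = "length u"
  have "(\<exists>\<delta>. \<delta> permutes {..<length h} \<and> strict_mono_on {..<?j} (inv \<delta>) \<and>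
        strict_mono_on {?j..<length h} (inv \<delta>) \<and> (\<forall>i<length h. h ! i = ?w ! \<delta> i))
      \<longleftrightarrow> parking_split h u v"
    if uv: "is_parking u" "is_parking v" and len: "length u + length v = length h"
  proof -
    have w: "length ?w = length h" "take ?j ?w = u" "drop ?j ?w = map (\<lambda>a. a + ?j) v"
      using len by (simp_all add: times_P_def)
    have jn: "?j \<le> length h" using len by simp
    show ?thesis
    proof
      assume "\<exists>\<delta>. \<delta> permutes {..<length h} \<and> strict_mono_on {..<?j} (inv \<delta>) \<and>
        strict_mono_on {?j..<length h} (inv \<delta>) \<and> (\<forall>i<length h. h ! i = ?w ! \<delta> i)"
      then obtain \<delta> where "\<delta> permutes {..<length h}" "strict_mono_on {..<?j} (inv \<delta>)"
        "strict_mono_on {?j..<length h} (inv \<delta>)" "\<forall>i<length h. h ! i = ?w ! \<delta> i" by blast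
      moreover have "\<And>k. k < length h \<Longrightarrow> ?w ! k \<le> ?j \<longleftrightarrow> k < ?j"
        using times_P_separates[OF uv] len by simp
      ultimately have "filter (\<lambda>a. a \<le> ?j) h = take ?j ?w \<and> filter (\<lambda>a. ?j < a) h = drop ?j ?w"
        using unshuffle_perm_imp_filters[OF w(1) jn] by blast
      then show "parking_split h u v" using uv w by (simp add: parking_split_def)
    next
      assume "parking_split h u v"
      then have "filter (\<lambda>a. a \<le> ?j) h = take ?j ?w" "filter (\<lambda>a. ?j < a) h = drop ?j ?w"
        using w by (simp_all add: parking_split_def)
      then obtain \<delta> where "\<delta> permutes {..<length h}" "strict_mono_on {..<?j} (inv \<delta>)"
        "strict_mono_on {?j..<length h} (inv \<delta>)" "\<forall>i<length h. h ! i = ?w ! \<delta> i"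
        using filters_imp_unshuffle_perm[OF w(1) jn] by blast
      then show "\<exists>\<delta>. \<delta> permutes {..<length h} \<and> strict_mono_on {..<?j} (inv \<delta>) \<and>
          strict_mono_on {?j..<length h} (inv \<delta>) \<and> (\<forall>i<length h. h ! i = ?w ! \<delta> i)" by blast
    qed
  qed
  moreover have "parking_split h u v \<Longrightarrow> is_parking u \<and> is_parking v \<and> length u + length v = length h"
    using parking_split_length by (simp add: parking_split_def)
  ultimately show ?thesis unfolding PQ_Delta_b_def by auto
qed

definition parking_lifts :: "nat list \<Rightarrow> nat list \<Rightarrow> nat list \<Rightarrow> nat list set" where
  "parking_lifts u v f = {h. is_parking h \<and> std h = f \<and> parking_split h u v}"

definition ST_cuts :: "nat list \<Rightarrow> nat list \<Rightarrow> nat list \<Rightarrow> nat set" where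
  "ST_cuts u v f = {t \<in> {0..wmax f}. restr f {1..t} = std u \<and> std (restr f {t+1..wmax f}) = std v}"

text \<open>Different cuts of a surjective word give restrictions of different lengths.\<close>
lemma ST_cuts_unique:
  assumes f: "surj_word f" and t: "t \<in> ST_cuts u v f" and t': "t' \<in> ST_cuts u v f"
  shows "t = t'"
proof -
  have False if a: "a \<in> ST_cuts u v f" "b \<in> ST_cuts u v f" "a < b" for a b
  proof -
    have "b \<in> set f" using f a by (auto simp: surj_word_def ST_cuts_def)
    then have "length (filter (\<lambda>c. c \<in> {1..a}) f) < length (filter (\<lambda>c. c \<in> {1..b}) f)"
      by (rule length_filter_less_filter[rotated]) (use a(3) in auto)
    moreover have "length (restr f {1..a}) = length (restr f {1..b})"
      using a by (auto simp: ST_cuts_def)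
    ultimately show False by (simp add: restr_def)
  qed
  then show ?thesis using t t' by (meson linorder_neqE_nat)
qed

lemma rank_in_le_card_iff:
  "a \<in> set h \<Longrightarrow> rank_in h a \<le> card {b \<in> set h. b \<le> j} \<longleftrightarrow> a \<le> j"
proof
  assume a: "a \<in> set h" and le: "rank_in h a \<le> card {b \<in> set h. b \<le> j}"
  show "a \<le> j"
  proof (rule ccontr)
    assume "\<not> a \<le> j"
    then have "{b \<in> set h. b \<le> j} \<subset> {b \<in> set h. b \<le> a}" using a by auto
    then have "card {b \<in> set h. b \<le> j} < rank_in h a"
      unfolding rank_in_def by (simp add: psubset_card_mono)
    then show False using le by simp
  qed
next
  assume "a \<le> j"
  then show "rank_in h a \<le> card {b \<in> set h. b \<le> j}"
    unfolding rank_in_def by (intro card_mono) auto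
qed

lemma std_map_shift: "std (map (\<lambda>a. a + j) v) = std v"
  by (rule std_map_strict_mono_on) (simp add: strict_mono_onI)

lemma parking_lift_cut:
  assumes "h \<in> parking_lifts u v f"
  defines "t \<equiv> card {b \<in> set h. b \<le> length u}"
  shows "t \<in> ST_cuts u v f" and "i < length h \<Longrightarrow> f ! i \<le> t \<longleftrightarrow> h ! i \<le> length u"
proof -
  let ?j = "length u" and ?r = "rank_in h"
  have f: "f = map ?r h" and F1: "filter (\<lambda>a. a \<le> ?j) h = u"
    and F2: "filter (\<lambda>a. ?j < a) h = map (\<lambda>a. a + ?j) v"
    using assms by (auto simp: parking_lifts_def parking_split_def std_eq_map_rank_in)
  have key: "a \<in> set h \<Longrightarrow> ?r a \<le> t \<longleftrightarrow> a \<le> ?j" for a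
    unfolding t_def by (rule rank_in_le_card_iff)
  show "i < length h \<Longrightarrow> f ! i \<le> t \<longleftrightarrow> h ! i \<le> ?j"
    using key[of "h ! i"] f by simp
  have setf: "set f = {1..card (set h)}" by (simp add: f rank_in_image)
  have tM: "t \<le> card (set h)" unfolding t_def by (rule card_mono) auto
  have rb: "a \<in> set h \<Longrightarrow> 1 \<le> ?r a \<and> ?r a \<le> card (set h)" for a by (rule rank_in_bounds)
  have R1: "restr f {1..t} = map ?r u"
  proof -
    have "filter (\<lambda>a. ?r a \<in> {1..t}) h = filter (\<lambda>a. a \<le> ?j) h"
      by (rule filter_cong) (use key rb in auto)
    then show ?thesis unfolding restr_def f using F1 by (simp add: filter_map comp_def)
  qed
  have "set (map ?r u) = set f \<inter> {1..t}" unfolding R1[symmetric] restr_def by auto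
  also have "\<dots> = {1..t}" using setf tM by auto
  finally have "std (map ?r u) = map ?r u" by (intro std_surj_word surj_wordI)
  then have su: "std u = map ?r u"
    using std_map_rank_in_sublist[of u h] F1 by (metis filter_is_subset)
  have R2: "restr f {t+1..card (set h)} = map ?r (map (\<lambda>a. a + ?j) v)"
  proof -
    have "filter (\<lambda>a. ?r a \<in> {t+1..card (set h)}) h = filter (\<lambda>a. ?j < a) h"
      by (rule filter_cong) (use key rb in force)+
    then show ?thesis unfolding restr_def f using F2 by (simp add: filter_map comp_def)
  qed
  have sv: "std (restr f {t+1..card (set h)}) = std v"
    unfolding R2 using std_map_rank_in_sublist[of _ h] std_map_shift F2 by (metis filter_is_subset)
  show "t \<in> ST_cuts u v f"
    unfolding ST_cuts_def wmax_eq_interval[OF setf] using tM su R1 sv by simp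
qed

lemma list_eq_by_filters:
  "length h = length h' \<Longrightarrow> (\<forall>i<length h. Q (h ! i) \<longleftrightarrow> Q (h' ! i)) \<Longrightarrow>
   filter Q h = filter Q h' \<Longrightarrow> filter (\<lambda>a. \<not> Q a) h = filter (\<lambda>a. \<not> Q a) h' \<Longrightarrow> h = h'"
proof (induction h h' rule: list_induct2)
  case (Cons x xs y ys)
  have "Q x \<longleftrightarrow> Q y" "\<forall>i<length xs. Q (xs ! i) \<longleftrightarrow> Q (ys ! i)" using Cons.prems(1) by force+
  then show ?case using Cons by (cases "Q x") auto
qed simp

lemma parking_lifts_unique:
  assumes h: "h \<in> parking_lifts u v f" and h': "h' \<in> parking_lifts u v f"
  shows "h = h'"
proof -
  let ?j = "length u"
  have hh': "std h = f" "std h' = f" "parking_split h u v" "parking_split h' u v"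
    using h h' by (auto simp: parking_lifts_def)
  then have len: "length h' = length h" using length_std[of h] length_std[of h'] by simp
  have "surj_word f" using surj_word_std[of h] hh'(1) by simp
  then have cut: "card {b \<in> set h. b \<le> ?j} = card {b \<in> set h'. b \<le> ?j}"
    by (rule ST_cuts_unique[OF _ parking_lift_cut(1)[OF h] parking_lift_cut(1)[OF h']])
  have "\<forall>i<length h. h ! i \<le> ?j \<longleftrightarrow> h' ! i \<le> ?j"
    using parking_lift_cut(2)[OF h] parking_lift_cut(2)[OF h'] len cut by simp
  moreover have "filter (\<lambda>a. a \<le> ?j) h = filter (\<lambda>a. a \<le> ?j) h'"
    "filter (\<lambda>a. \<not> a \<le> ?j) h = filter (\<lambda>a. \<not> a \<le> ?j) h'"
    using hh'(3,4) by (simp_all add: parking_split_def not_le)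
  ultimately show ?thesis using list_eq_by_filters len by metis
qed

lemma count_less_filter_split:
  "count_less h b = count_less (filter P h) b + count_less (filter (\<lambda>a. \<not> P a) h) b"
  unfolding count_less_def filter_filter
  using sum_length_filter_compl[of P "filter (\<lambda>u. u < b) h"] by (simp add: filter_filter conj_commute)

lemma is_parking_shuffle:
  assumes u: "is_parking u" and v: "is_parking v"
    and F1: "filter (\<lambda>a. a \<le> length u) h = u" and F2: "filter (\<lambda>a. length u < a) h = map (\<lambda>a. a + length u) v"
  shows "is_parking h"
  unfolding is_parking_iff_count_less
proof
  let ?j = "length u"
  fix b assume b: "b \<in> set h"
  have split: "count_less h b = count_less u b + count_less (map (\<lambda>a. a + ?j) v) b"
    using count_less_filter_split[of h b "\<lambda>a. a \<le> ?j"] F1 F2 by (simp add: not_le)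
  show "1 \<le> b \<and> b \<le> count_less h b + 1"
  proof (cases "b \<le> ?j")
    case True
    then have "b \<in> set (filter (\<lambda>a. a \<le> ?j) h)" using b by simp
    then have "b \<in> set u" unfolding F1 .
    then show ?thesis using u split by (auto simp: is_parking_iff_count_less)
  next
    case False
    then have "b \<in> set (filter (\<lambda>a. ?j < a) h)" using b by simp
    then have "b \<in> set (map (\<lambda>a. a + ?j) v)" unfolding F2 .
    then obtain c where c: "c \<in> set v" "b = c + ?j" by auto
    have "\<forall>a\<in>set u. a < b" using is_parking_letter_bounds[OF u] False by (meson le_less_trans not_le)
    then have "count_less u b = ?j" unfolding count_less_def by (simp add: filter_True)
    moreover have "count_less (map (\<lambda>a. a + ?j) v) b = count_less v c"
      unfolding count_less_def c(2) by (simp add: filter_map comp_def)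
    ultimately show ?thesis using v c split by (auto simp: is_parking_iff_count_less)
  qed
qed

lemma strict_mono_on_piecewise:
  fixes S :: "'a::linorder set"
  assumes "strict_mono_on {a \<in> S. a \<le> t} \<alpha>" "strict_mono_on {a \<in> S. t < a} \<beta>"
    and "\<And>a b. a \<in> S \<Longrightarrow> b \<in> S \<Longrightarrow> a \<le> t \<Longrightarrow> t < b \<Longrightarrow> \<alpha> a < \<beta> b"
  shows "strict_mono_on S (\<lambda>a. if a \<le> t then \<alpha> a else \<beta> a)"
proof (rule strict_mono_onI)
  fix r s assume "r \<in> S" "s \<in> S" "r < s"
  then show "(if r \<le> t then \<alpha> r else \<beta> r) < (if s \<le> t then \<alpha> s else \<beta> s)"
    using assms strict_mono_onD[OF assms(1), of r s] strict_mono_onD[OF assms(2), of r s] by auto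
qed

lemma obtain_std_inverse:
  obtains \<chi> where "strict_mono_on (set (std u)) \<chi>" "u = map \<chi> (std u)"
proof
  let ?r = "rank_in u"
  define \<chi> where "\<chi> = the_inv_into (set u) ?r"
  have i: "inj_on ?r (set u)" by (rule strict_mono_on_imp_inj_on[OF strict_mono_on_rank_in])
  have c: "a \<in> set u \<Longrightarrow> \<chi> (?r a) = a" for a unfolding \<chi>_def by (rule the_inv_into_f_f[OF i])
  show "u = map \<chi> (std u)" using c by (simp add: std_eq_map_rank_in map_idI)
  show "strict_mono_on (set (std u)) \<chi>"
  proof (rule strict_mono_onI)
    fix r s assume "r \<in> set (std u)" "s \<in> set (std u)" "r < s"
    then obtain a b where "a \<in> set u" "b \<in> set u" "r = ?r a" "s = ?r b"
      by (auto simp: std_eq_map_rank_in)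
    then show "\<chi> r < \<chi> s" using \<open>r < s\<close> c strict_mono_on_less[OF strict_mono_on_rank_in] by auto
  qed
qed

lemma std_eq_std_obtain_strict_mono_on:
  assumes "std a = std b"
  obtains \<beta> where "strict_mono_on (set a) \<beta>" "b = map \<beta> a"
proof -
  obtain \<chi> where m\<chi>: "strict_mono_on (set (std a)) \<chi>" and b: "b = map \<chi> (std a)"
    using obtain_std_inverse[of b] unfolding assms by blast
  show ?thesis
  proof
    show "b = map (\<chi> \<circ> rank_in a) a" using b by (simp add: std_eq_map_rank_in)
    show "strict_mono_on (set a) (\<chi> \<circ> rank_in a)"
    proof (rule strict_mono_onI)
      fix r s assume "r \<in> set a" "s \<in> set a" "r < s"
      then have "rank_in a r < rank_in a s" "rank_in a r \<in> set (std a)" "rank_in a s \<in> set (std a)"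
        using strict_mono_onD[OF strict_mono_on_rank_in] by (auto simp: std_eq_map_rank_in)
      then show "(\<chi> \<circ> rank_in a) r < (\<chi> \<circ> rank_in a) s" using strict_mono_onD[OF m\<chi>] by simp
    qed
  qed
qed

lemma relabel_blocks_parking_lift:
  fixes f :: "nat list" and t :: nat
  defines "r1 \<equiv> filter (\<lambda>a. a \<le> t) f" and "r2 \<equiv> filter (\<lambda>a. t < a) f"
  assumes pu: "is_parking u" and pv: "is_parking v"
    and m\<alpha>: "strict_mono_on (set r1) \<alpha>" and u\<alpha>: "u = map \<alpha> r1"
    and m\<beta>: "strict_mono_on (set r2) \<beta>" and v\<beta>: "v = map \<beta> r2"
  shows "map (\<lambda>a. if a \<le> t then \<alpha> a else \<beta> a + length u) f \<in> parking_lifts u v (std f)"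
proof -
  let ?j = "length u"
  define \<chi> where "\<chi> = (\<lambda>a. if a \<le> t then \<alpha> a else \<beta> a + ?j)"
  have \<alpha>_bounds: "a \<in> set r1 \<Longrightarrow> 1 \<le> \<alpha> a \<and> \<alpha> a \<le> ?j" for a
    using is_parking_letter_bounds[OF pu] u\<alpha> by auto
  have \<beta>_pos: "a \<in> set r2 \<Longrightarrow> 1 \<le> \<beta> a" for a
    using is_parking_letter_bounds[OF pv] v\<beta> by auto
  have \<chi>_le: "a \<in> set f \<Longrightarrow> \<chi> a \<le> ?j \<longleftrightarrow> a \<le> t" for a
    using \<alpha>_bounds[of a] \<beta>_pos[of a] by (auto simp: \<chi>_def r1_def r2_def)
  have F1: "filter (\<lambda>b. b \<le> ?j) (map \<chi> f) = u"
  proof -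
    have "filter (\<lambda>a. \<chi> a \<le> ?j) f = r1" unfolding r1_def by (rule filter_cong) (simp_all add: \<chi>_le)
    moreover have "map \<chi> r1 = u" using u\<alpha> by (auto simp: \<chi>_def r1_def)
    ultimately show ?thesis by (simp add: filter_map comp_def)
  qed
  have F2: "filter (\<lambda>b. ?j < b) (map \<chi> f) = map (\<lambda>a. a + ?j) v"
  proof -
    have "filter (\<lambda>a. ?j < \<chi> a) f = r2"
      unfolding r2_def by (rule filter_cong) (simp_all add: \<chi>_le flip: not_le)
    moreover have "map \<chi> r2 = map (\<lambda>a. a + ?j) v" using v\<beta> by (auto simp: \<chi>_def r2_def)
    ultimately show ?thesis by (simp add: filter_map comp_def)
  qed
  have "strict_mono_on (set f) \<chi>" unfolding \<chi>_def
  proof (rule strict_mono_on_piecewise)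
    show "strict_mono_on {a \<in> set f. a \<le> t} \<alpha>" using m\<alpha> by (simp add: r1_def)
    show "strict_mono_on {a \<in> set f. t < a} (\<lambda>a. \<beta> a + ?j)"
      using m\<beta> by (auto simp: r2_def intro!: strict_mono_onI dest: strict_mono_onD)
    show "\<alpha> a < \<beta> b + ?j" if "a \<in> set f" "b \<in> set f" "a \<le> t" "t < b" for a b
      using \<alpha>_bounds[of a] \<beta>_pos[of b] that by (simp add: r1_def r2_def)
  qed
  then have "std (map \<chi> f) = std f" by (rule std_map_strict_mono_on)
  then have "map \<chi> f \<in> parking_lifts u v (std f)" using is_parking_shuffle[OF pu pv F1 F2] pu pv F1 F2
    by (simp add: parking_lifts_def parking_split_def)
  then show ?thesis unfolding \<chi>_def .
qed

lemma ST_cut_imp_parking_lift: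
  assumes sf: "surj_word f" and pu: "is_parking u" and pv: "is_parking v" and t: "t \<in> ST_cuts u v f"
  shows "parking_lifts u v f \<noteq> {}"
proof -
  have setf: "set f = {1..wmax f}" using sf by (simp add: surj_word_def)
  have "filter (\<lambda>a. a \<le> t) f = restr f {1..t}" "filter (\<lambda>a. t < a) f = restr f {t+1..wmax f}"
    unfolding restr_def by (rule filter_cong; use setf in auto)+
  then have "std (filter (\<lambda>a. a \<le> t) f) = std u" and "std (filter (\<lambda>a. t < a) f) = std v"
    using t std_surj_word[OF surj_word_std] by (simp_all add: ST_cuts_def)
  then obtain \<alpha> \<beta> where "strict_mono_on (set (filter (\<lambda>a. a \<le> t) f)) \<alpha>" "u = map \<alpha> (filter (\<lambda>a. a \<le> t) f)"
    "strict_mono_on (set (filter (\<lambda>a. t < a) f)) \<beta>" "v = map \<beta> (filter (\<lambda>a. t < a) f)"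
    by (metis std_eq_std_obtain_strict_mono_on)
  then have "map (\<lambda>a. if a \<le> t then \<alpha> a else \<beta> a + length u) f \<in> parking_lifts u v (std f)"
    by (rule relabel_blocks_parking_lift[OF pu pv])
  then show ?thesis using std_surj_word[OF sf] by auto
qed

lemma card_eq_if_subsingleton:
  assumes "\<And>a b. a \<in> A \<Longrightarrow> b \<in> A \<Longrightarrow> a = b"
  shows "card A = (if A = {} then 0 else 1)"
proof (cases "A = {}")
  case False
  then obtain a where "a \<in> A" by blast
  then have "A = {a}" using assms by blast
  then show ?thesis by simp
qed simp

lemma card_parking_lifts:
  assumes f: "surj_word f"
  shows "card (parking_lifts u v f) = (if is_parking u \<and> is_parking v then card (ST_cuts u v f) else 0)"
proof -
  have "parking_lifts u v f \<noteq> {} \<longleftrightarrow> is_parking u \<and> is_parking v \<and> ST_cuts u v f \<noteq> {}"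
  proof
    assume "parking_lifts u v f \<noteq> {}"
    then obtain h where h: "h \<in> parking_lifts u v f" by blast
    then show "is_parking u \<and> is_parking v \<and> ST_cuts u v f \<noteq> {}"
      using parking_lift_cut(1)[OF h] by (auto simp: parking_lifts_def parking_split_def)
  qed (use ST_cut_imp_parking_lift[OF f] in blast)
  moreover have "card (parking_lifts u v f) = (if parking_lifts u v f = {} then 0 else 1)"
    by (rule card_eq_if_subsingleton) (rule parking_lifts_unique)
  moreover have "card (ST_cuts u v f) = (if ST_cuts u v f = {} then 0 else 1)"
    by (rule card_eq_if_subsingleton) (rule ST_cuts_unique[OF f])
  ultimately show ?thesis by auto
qed

lemma PQ_Delta_alpha_apply:
  fixes x :: "nat list \<Rightarrow> 'a::comm_ring_1"
  assumes fx: "finite (supp x)"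
  shows "PQ_Delta (alpha x) (u, v) = (\<Sum>f\<in>supp x. x f * of_nat (card (parking_lifts u v f)))"
proof -
  let ?S = "supp (alpha x)" and ?L = "{h \<in> supp (alpha x). parking_split h u v}"
  have fS: "finite ?S" by (rule finite_supp_alpha[OF fx])
  have inS: "h \<in> ?S \<longleftrightarrow> is_parking h \<and> std h \<in> supp x" for h
    using alpha_apply[OF fx, of h] by (simp add: supp_def)
  have "PQ_Delta (alpha x) (u, v) = (\<Sum>h\<in>?S. if parking_split h u v then x (std h) else 0)"
    unfolding PQ_Delta_def lin_ext_def PQ_Delta_b_eq
    by (intro sum.cong refl) (simp add: alpha_apply[OF fx] inS)
  also have "\<dots> = (\<Sum>h\<in>?L. x (std h))"
    by (rule sum.inter_filter[symmetric, OF fS])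
  also have "\<dots> = (\<Sum>f\<in>supp x. \<Sum>h\<in>{h\<in>?L. std h = f}. x (std h))"
  proof -
    have "finite ?L" using fS by simp
    moreover have "std ` ?L \<subseteq> supp x" using inS by blast
    ultimately show ?thesis by (rule sum.group[symmetric, OF _ fx])
  qed
  also have "\<dots> = (\<Sum>f\<in>supp x. x f * of_nat (card (parking_lifts u v f)))"
  proof (rule sum.cong[OF refl])
    fix f assume "f \<in> supp x"
    then have "{h\<in>?L. std h = f} = parking_lifts u v f" by (auto simp: parking_lifts_def inS)
    then show "(\<Sum>h\<in>{h\<in>?L. std h = f}. x (std h)) = x f * of_nat (card (parking_lifts u v f))"
      by (simp add: parking_lifts_def)
  qed
  finally show ?thesis .
qed

lemma tensor_ext_alpha_b_apply:
  fixes T :: "nat list \<times> nat list \<Rightarrow> 'a::comm_ring_1"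
  assumes "finite (supp T)"
  shows "tensor_ext alpha_b T (u, v) = (if is_parking u \<and> is_parking v then T (std u, std v) else 0)"
proof -
  have "tensor_ext alpha_b T (u, v) = (\<Sum>p\<in>supp T.
      if p = (std u, std v) then (if is_parking u \<and> is_parking v then T p else 0) else 0)"
    unfolding tensor_ext_def by (auto simp: alpha_b_eq intro!: sum.cong)
  also have "\<dots> = (if is_parking u \<and> is_parking v then T (std u, std v) else 0)"
    using assms by (simp add: sum.delta supp_def)
  finally show ?thesis .
qed

lemma ST_Delta_b_apply:
  "ST_Delta_b f (a, b) = of_nat (card {t\<in>{0..wmax f}. restr f {1..t} = a \<and> std (restr f {t+1..wmax f}) = b})"
proof -
  have "ST_Delta_b f (a, b) = (\<Sum>t\<in>{0..wmax f}.
      if restr f {1..t} = a \<and> std (restr f {t+1..wmax f}) = b then 1 else 0)"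
    unfolding ST_Delta_b_def by simp
  also have "\<dots> = (\<Sum>t\<in>{t\<in>{0..wmax f}. restr f {1..t} = a \<and> std (restr f {t+1..wmax f}) = b}. 1)"
    by (rule sum.inter_filter[symmetric]) simp
  finally show ?thesis by simp
qed

lemma finite_supp_ST_Delta:
  fixes x :: "nat list \<Rightarrow> 'a::comm_ring_1"
  assumes "finite (supp x)"
  shows "finite (supp (ST_Delta x))"
  unfolding ST_Delta_def
proof (rule finite_supp_lin_ext[OF assms])
  fix f
  show "finite (supp (ST_Delta_b f :: _ \<Rightarrow> 'a))"
  proof (rule finite_subset)
    show "supp (ST_Delta_b f :: _ \<Rightarrow> 'a) \<subseteq> (\<lambda>t. (restr f {1..t}, std (restr f {t+1..wmax f}))) ` {0..wmax f}"
    proof (clarify)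
      fix a b assume "(a, b) \<in> supp (ST_Delta_b f :: _ \<Rightarrow> 'a)"
      then have "ST_Delta_b f (a, b) \<noteq> (0 :: 'a)" by (simp add: supp_def)
      then have "card {t\<in>{0..wmax f}. restr f {1..t} = a \<and> std (restr f {t+1..wmax f}) = b} \<noteq> 0"
        unfolding ST_Delta_b_apply by (metis of_nat_0)
      then have "{t\<in>{0..wmax f}. restr f {1..t} = a \<and> std (restr f {t+1..wmax f}) = b} \<noteq> {}"
        by (metis card.empty)
      then show "(a, b) \<in> (\<lambda>t. (restr f {1..t}, std (restr f {t+1..wmax f}))) ` {0..wmax f}" by auto
    qed
  qed simp
qed

lemma PQ_Delta_alpha:
  fixes x :: "nat list \<Rightarrow> 'a::comm_ring_1"
  assumes fx: "finite (supp x)" and sx: "\<forall>f\<in>supp x. surj_word f"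
  shows "PQ_Delta (alpha x) = tensor_ext alpha_b (ST_Delta x)"
proof (rule ext, clarify)
  fix u v
  have "ST_Delta x (std u, std v) = (\<Sum>f\<in>supp x. x f * of_nat (card (ST_cuts u v f)))"
    unfolding ST_Delta_def lin_ext_def ST_Delta_b_apply ST_cuts_def ..
  then show "PQ_Delta (alpha x) (u, v) = tensor_ext alpha_b (ST_Delta x) (u, v)"
    unfolding PQ_Delta_alpha_apply[OF fx] tensor_ext_alpha_b_apply[OF finite_supp_ST_Delta[OF fx]]
    using card_parking_lifts sx by (auto intro!: sum.neutral)
qed

text \<open>Every surjective word is its own standardization, so x is recovered from alpha x.\<close>
lemma in_ST_eq_alpha_on_surj_words:
  assumes "in_ST x"
  shows "x = (\<lambda>w. if surj_word w then alpha x w else 0)"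
proof
  fix w
  have "finite (supp x)" using assms by (simp add: in_ST_def)
  moreover have "\<not> surj_word w \<Longrightarrow> x w = 0" using assms by (auto simp: in_ST_def supp_def)
  ultimately show "x w = (if surj_word w then alpha x w else 0)"
    by (simp add: alpha_apply surj_word_imp_parking std_surj_word)
qed

lemma inj_on_alpha: "inj_on alpha {x :: nat list \<Rightarrow> 'a::comm_ring_1. in_ST x}"
proof (rule inj_onI)
  fix x y :: "nat list \<Rightarrow> 'a" assume "x \<in> {x. in_ST x}" "y \<in> {x. in_ST x}" and eq: "alpha x = alpha y"
  then have "x = (\<lambda>w. if surj_word w then alpha x w else 0)" "y = (\<lambda>w. if surj_word w then alpha y w else 0)"
    using in_ST_eq_alpha_on_surj_words by auto
  then show "x = y" unfolding eq by (simp only:)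
qed

theorem theorem3p2:
  fixes q :: "'a::field"
  shows "inj_on (alpha :: (nat list \<Rightarrow> 'a) \<Rightarrow> _) {x. in_ST x} \<and>
    (\<forall>x y :: nat list \<Rightarrow> 'a. in_ST x \<longrightarrow> in_ST y \<longrightarrow>
        alpha (ST_succ q x y) = PQ_succ q (alpha x) (alpha y) \<and>
        alpha (ST_dot q x y) = PQ_dot q (alpha x) (alpha y) \<and>
        alpha (ST_prec q x y) = PQ_prec q (alpha x) (alpha y)) \<and>
    (\<forall>x :: nat list \<Rightarrow> 'a. in_ST x \<longrightarrow>
        PQ_Delta (alpha x) = tensor_ext alpha_b (ST_Delta x))"
proof (intro conjI allI impI)
  show "inj_on (alpha :: (nat list \<Rightarrow> 'a) \<Rightarrow> _) {x. in_ST x}" by (rule inj_on_alpha)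
next
  fix x y :: "nat list \<Rightarrow> 'a" assume "in_ST x" "in_ST y"
  then have "finite (supp x)" "finite (supp y)" by (simp_all add: in_ST_def)
  then show "alpha (ST_succ q x y) = PQ_succ q (alpha x) (alpha y)"
    "alpha (ST_dot q x y) = PQ_dot q (alpha x) (alpha y)"
    "alpha (ST_prec q x y) = PQ_prec q (alpha x) (alpha y)"
    by (simp_all add: alpha_ST_succ alpha_ST_dot alpha_ST_prec)
next
  fix x :: "nat list \<Rightarrow> 'a" assume "in_ST x"
  then show "PQ_Delta (alpha x) = tensor_ext alpha_b (ST_Delta x)"
    by (intro PQ_Delta_alpha) (simp_all add: in_ST_def)
qed

end
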